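(* Let $d\ge2$, let $\Delta^d$ be the probability simplex in $\mathbb{R}^d$, and let $\pi\in\Delta^d$ have all coordinates positive. Let $\mathcal{A}$ be a coin-betting algorithm that, given past coin outcomes $c'_1,\dots,c'_{t-1}$, outputs a bet $x_t\in\mathbb{R}$, and suppose that for some function $f_T:\mathbb{R}\to\mathbb{R}$ it guarantees, for every sequence $c'_1,\dots,c'_T\in[-1,1]$ (where $c'_t$ may depend on $x_1,\dots,x_t$), $1+\sum_{t=1}^Tc'_tx_t\ge\exp\big(f_T(\sum_{t=1}^Tc'_t)\big)$. Run $d$ copies of $\mathcal{A}$; at round $t$ let $x_{t,i}$ be the bet of copy $i$, set $\hat p_{t,i}=\pi_i\max(x_{t,i},0)$, predict $p_t=\hat p_t/\|\hat p_t\|_1$ if $\hat p_t\ne0$ and $p_t=\pi$ otherwise, receive $g_t\in[0,1]^d$, and feed copy $i$ the coin outcome $c_{t,i}=\langle g_t,p_t\rangle-g_{t,i}$ if $x_{t,i}>0$ and $c_{t,i}=\max(\langle g_t,p_t\rangle-g_{t,i},0)$ if $x_{t,i}\le0$. Then for every concave non-decreasing $h:\mathbb{R}\to\mathbb{R}$ satisfying $x\le h(f_T(x))$ for all $x\in[-T,T]$, and every $u\in\Delta^d$, \[ \sum_{t=1}^T\langle g_t,p_t-u\rangle\le h\big(\mathrm{KL}(u;\pi)\big). \]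
   Context: $\mathrm{KL}(u;\pi)=\sum_{i=1}^du_i\ln\frac{u_i}{\pi_i}$ with the convention $0\ln0=0$. *)

theory Defs
  imports "HOL-Analysis.Analysis"
begin

text \<open>Coordinates of vectors in R^d are indexed by 0..d-1; rounds by 0..T-1.
A coin-betting algorithm is a deterministic map from the list of past coin
outcomes to a real bet.\<close>

type_synonym coin_alg = "real list \<Rightarrow> real"

definition KL :: "nat \<Rightarrow> (nat \<Rightarrow> real) \<Rightarrow> (nat \<Rightarrow> real) \<Rightarrow> real" where
  "KL d u \<pi> = (\<Sum>i<d. if u i = 0 then 0 else u i * ln (u i / \<pi> i))"

definition in_simplex :: "nat \<Rightarrow> (nat \<Rightarrow> real) \<Rightarrow> bool" where
  "in_simplex d u \<longleftrightarrow> (\<forall>i<d. 0 \<le> u i) \<and> (\<Sum>i<d. u i) = 1"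

definition coin_guarantee :: "coin_alg \<Rightarrow> nat \<Rightarrow> (real \<Rightarrow> real) \<Rightarrow> bool" where
  "coin_guarantee A T f \<longleftrightarrow>
     (\<forall>c::nat \<Rightarrow> real. (\<forall>t<T. c t \<in> {-1..1}) \<longrightarrow>
        exp (f (\<Sum>t<T. c t)) \<le> 1 + (\<Sum>t<T. c t * A (map c [0..<t])))"

definition pred :: "nat \<Rightarrow> (nat \<Rightarrow> real) \<Rightarrow> (nat \<Rightarrow> real) \<Rightarrow> (nat \<Rightarrow> real)" where
  "pred d \<pi> x =
     (let ph = (\<lambda>i. \<pi> i * max (x i) 0);
          n = (\<Sum>j<d. \<bar>ph j\<bar>)
      in if (\<forall>i<d. ph i = 0) then \<pi> else (\<lambda>i. ph i / n))"

definition coin_out :: "nat \<Rightarrow> (nat \<Rightarrow> real) \<Rightarrow> (nat \<Rightarrow> real) \<Rightarrow> real \<Rightarrow> nat \<Rightarrow> real" where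
  "coin_out d gt p xi i =
     (let v = (\<Sum>j<d. gt j * p j) - gt i in if xi > 0 then v else max v 0)"

primrec hists :: "coin_alg \<Rightarrow> nat \<Rightarrow> (nat \<Rightarrow> real) \<Rightarrow> (nat \<Rightarrow> nat \<Rightarrow> real) \<Rightarrow> nat \<Rightarrow> nat \<Rightarrow> real list" where
  "hists A d \<pi> g 0 = (\<lambda>i. [])"
| "hists A d \<pi> g (Suc t) =
     (let H = hists A d \<pi> g t;
          x = (\<lambda>i. A (H i));
          p = pred d \<pi> x
      in (\<lambda>i. H i @ [coin_out d (g t) p (x i) i]))"

definition bet :: "coin_alg \<Rightarrow> nat \<Rightarrow> (nat \<Rightarrow> real) \<Rightarrow> (nat \<Rightarrow> nat \<Rightarrow> real) \<Rightarrow> nat \<Rightarrow> nat \<Rightarrow> real" where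
  "bet A d \<pi> g t i = A (hists A d \<pi> g t i)"

definition prediction :: "coin_alg \<Rightarrow> nat \<Rightarrow> (nat \<Rightarrow> real) \<Rightarrow> (nat \<Rightarrow> nat \<Rightarrow> real) \<Rightarrow> nat \<Rightarrow> nat \<Rightarrow> real" where
  "prediction A d \<pi> g t = pred d \<pi> (bet A d \<pi> g t)"

end

theory Submission
  imports Defs
begin

text \<open>Each copy \<open>i\<close> ends with wealth at least \<open>exp (f G\<^sub>i)\<close>, where \<open>G\<^sub>i\<close> is its total coin
outcome. The prediction is chosen so that the \<open>\<pi>\<close>-weighted wealth increments are never
positive, hence \<open>\<Sum>\<^sub>i \<pi>\<^sub>i exp (f G\<^sub>i) \<le> 1\<close>, and the variational bound
\<open>\<Sum>\<^sub>i u\<^sub>i y\<^sub>i \<le> KL(u;\<pi>) + \<Sum>\<^sub>i \<pi>\<^sub>i exp y\<^sub>i - 1\<close> gives \<open>\<Sum>\<^sub>i u\<^sub>i f G\<^sub>i \<le> KL(u;\<pi>)\<close>. Since the coins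
dominate the instantaneous regrets, the regret is at most \<open>\<Sum>\<^sub>i u\<^sub>i G\<^sub>i \<le> \<Sum>\<^sub>i u\<^sub>i h (f G\<^sub>i)\<close>,
and Jensen's inequality for the concave \<open>h\<close> followed by its monotonicity concludes.\<close>

definition coin_seq :: "coin_alg \<Rightarrow> nat \<Rightarrow> (nat \<Rightarrow> real) \<Rightarrow> (nat \<Rightarrow> nat \<Rightarrow> real) \<Rightarrow> nat \<Rightarrow> nat \<Rightarrow> real" where
  "coin_seq A d \<pi> g t i = coin_out d (g t) (prediction A d \<pi> g t) (bet A d \<pi> g t i) i"

lemma hists_Suc:
  "hists A d \<pi> g (Suc t) i = hists A d \<pi> g t i @ [coin_seq A d \<pi> g t i]"
proof -
  have "bet A d \<pi> g t = (\<lambda>i. A (hists A d \<pi> g t i))" by (rule ext) (simp add: bet_def)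
  then show ?thesis by (simp add: Let_def bet_def prediction_def coin_seq_def)
qed

lemma hists_eq_coin_seq: "hists A d \<pi> g t i = map (\<lambda>s. coin_seq A d \<pi> g s i) [0..<t]"
  by (induction t) (simp_all only: hists_Suc, simp_all)

lemma bet_eq_coin_seq: "bet A d \<pi> g t i = A (map (\<lambda>s. coin_seq A d \<pi> g s i) [0..<t])"
  by (simp add: bet_def hists_eq_coin_seq)

lemma pred_normalized:
  assumes "\<forall>i<d. \<pi> i \<ge> 0" and "\<exists>i<d. \<pi> i * max (x i) 0 \<noteq> 0"
  defines "ph \<equiv> \<lambda>i. \<pi> i * max (x i) 0"
  shows "(\<Sum>j<d. ph j) > 0" and "pred d \<pi> x = (\<lambda>i. ph i / (\<Sum>j<d. ph j))"
proof -
  have ph0: "\<forall>i<d. ph i \<ge> 0" using assms(1) by (simp add: ph_def)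
  from assms(2) obtain k where k: "k < d" "ph k \<noteq> 0" by (auto simp: ph_def)
  have "ph k \<le> (\<Sum>j<d. ph j)" using k ph0 by (intro member_le_sum) auto
  then show "(\<Sum>j<d. ph j) > 0" using k ph0 by force
  have "(\<Sum>j<d. \<bar>ph j\<bar>) = (\<Sum>j<d. ph j)" using ph0 by (intro sum.cong) auto
  then show "pred d \<pi> x = (\<lambda>i. ph i / (\<Sum>j<d. ph j))"
    using assms(2) unfolding pred_def Let_def ph_def by auto
qed

lemma pred_in_simplex:
  assumes "in_simplex d \<pi>"
  shows "in_simplex d (pred d \<pi> x)"
proof (cases "\<forall>i<d. \<pi> i * max (x i) 0 = 0")
  case True
  then show ?thesis using assms by (simp add: pred_def)
next
  case False
  have \<pi>0: "\<forall>i<d. \<pi> i \<ge> 0" using assms by (simp add: in_simplex_def)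
  with False pred_normalized[of d \<pi> x] show ?thesis
    by (auto simp: in_simplex_def sum_divide_distrib[symmetric])
qed

text \<open>The \<open>\<pi>\<close>-weighted wealth increment of the copies in one round is non-positive: on the
copies with positive bets it vanishes because \<open>p\<close> is proportional to \<open>\<pi>\<^sub>i x\<^sub>i\<close> there, and the
remaining copies bet \<open>x\<^sub>i \<le> 0\<close> against non-negative coins.\<close>

lemma pred_weighted_wealth_increment_nonpos:
  assumes "in_simplex d \<pi>" and "\<forall>i<d. \<pi> i > 0"
  shows "(\<Sum>i<d. \<pi> i * coin_out d gt (pred d \<pi> x) (x i) i * x i) \<le> 0"
proof -
  define p where "p = pred d \<pi> x"
  define ph where "ph = (\<lambda>i. \<pi> i * max (x i) 0)"
  define v where "v = (\<lambda>i. (\<Sum>j<d. gt j * p j) - gt i)"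
  have le: "\<pi> i * coin_out d gt p (x i) i * x i \<le> ph i * v i" if "i < d" for i
  proof (cases "x i > 0")
    case True
    then show ?thesis by (simp add: coin_out_def Let_def ph_def v_def)
  next
    case False
    have "\<pi> i > 0" using assms(2) that by simp
    then have "\<pi> i * coin_out d gt p (x i) i * x i \<le> 0"
      using False by (simp add: coin_out_def Let_def mult_nonneg_nonpos)
    then show ?thesis using False by (simp add: ph_def)
  qed
  have "(\<Sum>i<d. ph i * v i) = 0"
  proof (cases "\<forall>i<d. ph i = 0")
    case True
    then show ?thesis by simp
  next
    case False
    define n where "n = (\<Sum>j<d. ph j)"
    have "\<forall>i<d. \<pi> i \<ge> 0" using assms(2) by (simp add: less_imp_le)
    with False have "n > 0" and p: "p = (\<lambda>i. ph i / n)"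
      using pred_normalized[of d \<pi> x] unfolding p_def n_def ph_def by auto
    have "(\<Sum>i<d. p i) = 1" using pred_in_simplex[OF assms(1)] by (simp add: p_def in_simplex_def)
    moreover have "(\<Sum>i<d. ph i * v i) = n * (\<Sum>i<d. p i * v i)"
      using \<open>n > 0\<close> by (simp add: p sum_distrib_left)
    moreover have "(\<Sum>i<d. p i * v i) = (\<Sum>j<d. gt j * p j) * (\<Sum>i<d. p i) - (\<Sum>i<d. gt i * p i)"
      by (simp add: v_def right_diff_distrib sum_subtractf sum_distrib_right[symmetric] mult.commute)
    ultimately show ?thesis by simp
  qed
  moreover have "(\<Sum>i<d. \<pi> i * coin_out d gt p (x i) i * x i) \<le> (\<Sum>i<d. ph i * v i)"
    using le by (intro sum_mono) auto
  ultimately show ?thesis by (simp add: p_def)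
qed

lemma gain_inner_in_unit:
  assumes "\<forall>i<d. gt i \<in> {0..1}" and "in_simplex d p"
  shows "(\<Sum>j<d. gt j * p j) \<in> {0..1}"
proof -
  have "(\<Sum>j<d. gt j * p j) \<le> (\<Sum>j<d. p j)"
    using assms by (intro sum_mono) (auto simp: in_simplex_def intro!: mult_left_le_one_le)
  moreover have "(\<Sum>j<d. gt j * p j) \<ge> 0"
    using assms by (auto simp: in_simplex_def intro!: sum_nonneg)
  ultimately show ?thesis using assms(2) by (simp add: in_simplex_def)
qed

lemma coin_out_bounds:
  assumes "\<forall>i<d. gt i \<in> {0..1}" and "in_simplex d p" and "i < d"
  shows "coin_out d gt p xi i \<in> {-1..1}"
    and "coin_out d gt p xi i \<ge> (\<Sum>j<d. gt j * p j) - gt i"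
  using gain_inner_in_unit[OF assms(1,2)] assms(1,3)
  by (auto simp: coin_out_def Let_def)

context
  fixes A :: coin_alg and d T :: nat and \<pi> :: "nat \<Rightarrow> real" and g :: "nat \<Rightarrow> nat \<Rightarrow> real"
  assumes \<pi>_simplex: "in_simplex d \<pi>" and \<pi>_pos: "\<forall>i<d. \<pi> i > 0"
    and gains: "\<forall>t<T. \<forall>i<d. g t i \<in> {0..1}"
begin

lemma prediction_in_simplex: "in_simplex d (prediction A d \<pi> g t)"
  unfolding prediction_def by (rule pred_in_simplex[OF \<pi>_simplex])

lemma coin_seq_bounds:
  assumes "t < T" and "i < d"
  shows "coin_seq A d \<pi> g t i \<in> {-1..1}"
    and "coin_seq A d \<pi> g t i \<ge> (\<Sum>j<d. g t j * prediction A d \<pi> g t j) - g t i"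
  using coin_out_bounds[OF _ prediction_in_simplex] gains assms
  by (simp_all add: coin_seq_def)

lemma total_coin_in_range:
  assumes "i < d"
  shows "(\<Sum>t<T. coin_seq A d \<pi> g t i) \<in> {-real T..real T}"
proof -
  have "\<bar>\<Sum>t<T. coin_seq A d \<pi> g t i\<bar> \<le> (\<Sum>t<T. \<bar>coin_seq A d \<pi> g t i\<bar>)" by (rule sum_abs)
  also have "\<dots> \<le> (\<Sum>t<T. 1)" using coin_seq_bounds(1) assms by (intro sum_mono) force
  finally show ?thesis by auto
qed

lemma weighted_wealth_le_one:
  assumes "coin_guarantee A T f"
  shows "(\<Sum>i<d. \<pi> i * exp (f (\<Sum>t<T. coin_seq A d \<pi> g t i))) \<le> 1"
proof -
  let ?c = "coin_seq A d \<pi> g" and ?x = "bet A d \<pi> g"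
  have wealth: "exp (f (\<Sum>t<T. ?c t i)) \<le> 1 + (\<Sum>t<T. ?c t i * ?x t i)" if "i < d" for i
    using assms coin_seq_bounds(1) that unfolding coin_guarantee_def bet_eq_coin_seq by auto
  have round: "(\<Sum>i<d. \<pi> i * ?c t i * ?x t i) \<le> 0" for t
    using pred_weighted_wealth_increment_nonpos[OF \<pi>_simplex \<pi>_pos, of "g t" "?x t"]
    by (simp add: coin_seq_def prediction_def)
  have "(\<Sum>i<d. \<pi> i * exp (f (\<Sum>t<T. ?c t i))) \<le> (\<Sum>i<d. \<pi> i * (1 + (\<Sum>t<T. ?c t i * ?x t i)))"
    using wealth \<pi>_pos by (intro sum_mono mult_left_mono) auto
  also have "\<dots> = (\<Sum>i<d. \<pi> i) + (\<Sum>t<T. \<Sum>i<d. \<pi> i * ?c t i * ?x t i)"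
    by (simp add: distrib_left sum.distrib sum_distrib_left mult.assoc sum.swap[of _ "{..<T}"])
  also have "\<dots> \<le> 1"
    using \<pi>_simplex round sum_nonpos[of "{..<T}" "\<lambda>t. \<Sum>i<d. \<pi> i * ?c t i * ?x t i"]
    by (simp add: in_simplex_def)
  finally show ?thesis .
qed

lemma linear_regret_le_total_coin:
  assumes "in_simplex d u"
  shows "(\<Sum>t<T. \<Sum>i<d. g t i * (prediction A d \<pi> g t i - u i))
           \<le> (\<Sum>i<d. u i * (\<Sum>t<T. coin_seq A d \<pi> g t i))"
proof -
  define S where "S t = (\<Sum>j<d. g t j * prediction A d \<pi> g t j)" for t
  have usum: "(\<Sum>i<d. u i) = 1" and u0: "\<forall>i<d. u i \<ge> 0"
    using assms by (auto simp: in_simplex_def)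
  have "(\<Sum>i<d. g t i * (prediction A d \<pi> g t i - u i)) = (\<Sum>i<d. u i * (S t - g t i))" for t
  proof -
    have "(\<Sum>i<d. g t i * (prediction A d \<pi> g t i - u i)) = S t * (\<Sum>i<d. u i) - (\<Sum>i<d. g t i * u i)"
      using usum by (simp add: S_def right_diff_distrib sum_subtractf)
    also have "\<dots> = (\<Sum>i<d. u i * (S t - g t i))"
      by (simp add: right_diff_distrib sum_subtractf sum_distrib_left mult.commute)
    finally show ?thesis .
  qed
  then have "(\<Sum>t<T. \<Sum>i<d. g t i * (prediction A d \<pi> g t i - u i))
                  = (\<Sum>t<T. \<Sum>i<d. u i * (S t - g t i))" by simp
  also have "\<dots> \<le> (\<Sum>t<T. \<Sum>i<d. u i * coin_seq A d \<pi> g t i)"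
    using coin_seq_bounds(2) u0 unfolding S_def by (intro sum_mono mult_left_mono) auto
  also have "\<dots> = (\<Sum>i<d. u i * (\<Sum>t<T. coin_seq A d \<pi> g t i))"
    by (simp add: sum.swap[of _ "{..<T}"] sum_distrib_left)
  finally show ?thesis .
qed

end

lemma weighted_sum_le_KL_plus_exp:
  assumes "in_simplex d u" and "\<forall>i<d. \<pi> i > 0"
  shows "(\<Sum>i<d. u i * y i) \<le> KL d u \<pi> + (\<Sum>i<d. \<pi> i * exp (y i)) - 1"
proof -
  have u0: "\<forall>i<d. u i \<ge> 0" and usum: "(\<Sum>i<d. u i) = 1"
    using assms(1) by (auto simp: in_simplex_def)
  have entry_bound: "u i * y i \<le> (if u i = 0 then 0 else u i * ln (u i / \<pi> i)) + (\<pi> i * exp (y i) - u i)"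
    if "i < d" for i
  proof (cases "u i = 0")
    case True
    then show ?thesis using assms(2) that by (simp add: less_imp_le)
  next
    case False
    have up: "u i > 0" and pp: "\<pi> i > 0" using False u0 assms(2) that by force+
    have "y i - ln (u i / \<pi> i) = ln (\<pi> i * exp (y i) / u i)"
      using up pp by (simp add: ln_div ln_mult)
    also have "\<dots> \<le> \<pi> i * exp (y i) / u i - 1"
      using up pp by (intro ln_le_minus_one) simp
    finally have "u i * (y i - ln (u i / \<pi> i)) \<le> u i * (\<pi> i * exp (y i) / u i - 1)"
      using up by (intro mult_left_mono) auto
    then show ?thesis using up by (simp add: algebra_simps)
  qed
  have "(\<Sum>i<d. u i * y i)
          \<le> (\<Sum>i<d. (if u i = 0 then 0 else u i * ln (u i / \<pi> i)) + (\<pi> i * exp (y i) - u i))"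
    using entry_bound by (intro sum_mono) auto
  also have "\<dots> = KL d u \<pi> + (\<Sum>i<d. \<pi> i * exp (y i)) - 1"
    by (simp add: KL_def sum.distrib sum_subtractf usum)
  finally show ?thesis .
qed

theorem mainTheorem19:
  fixes A :: coin_alg and d T :: nat and \<pi> u :: "nat \<Rightarrow> real"
    and f h :: "real \<Rightarrow> real" and g :: "nat \<Rightarrow> nat \<Rightarrow> real"
  assumes "d \<ge> 2"
    and "in_simplex d \<pi>" and "\<forall>i<d. \<pi> i > 0"
    and "coin_guarantee A T f"
    and "\<forall>t<T. \<forall>i<d. g t i \<in> {0..1}"
    and "concave_on UNIV h" and "mono h"
    and "\<forall>x\<in>{-real T..real T}. x \<le> h (f x)"
    and "in_simplex d u"
  shows "(\<Sum>t<T. \<Sum>i<d. g t i * (prediction A d \<pi> g t i - u i)) \<le> h (KL d u \<pi>)"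
proof -
  define G where "G i = (\<Sum>t<T. coin_seq A d \<pi> g t i)" for i
  have u0: "\<forall>i<d. u i \<ge> 0" and usum: "(\<Sum>i<d. u i) = 1"
    using assms(9) by (auto simp: in_simplex_def)
  have "(\<Sum>t<T. \<Sum>i<d. g t i * (prediction A d \<pi> g t i - u i)) \<le> (\<Sum>i<d. u i * G i)"
    unfolding G_def using linear_regret_le_total_coin assms(2,3,5,9) .
  also have "\<dots> \<le> (\<Sum>i<d. u i * h (f (G i)))"
    using total_coin_in_range[OF assms(2,3,5)] assms(8) u0
    unfolding G_def by (intro sum_mono mult_left_mono) auto
  also have "\<dots> \<le> h (\<Sum>i<d. u i * f (G i))"
    using concave_on_sum[OF _ _ assms(6), of "{..<d}" u "\<lambda>i. f (G i)"] assms(1) usum u0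
    by (simp add: lessThan_empty_iff)
  also have "\<dots> \<le> h (KL d u \<pi>)"
  proof (rule monoD[OF assms(7)])
    show "(\<Sum>i<d. u i * f (G i)) \<le> KL d u \<pi>"
      using weighted_sum_le_KL_plus_exp[OF assms(9,3), of "\<lambda>i. f (G i)"]
        weighted_wealth_le_one[OF assms(2,3,5,4)]
      unfolding G_def by simp
  qed
  finally show ?thesis .
qed

end
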